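(* Let $G$ be a graph of order $n$ with a clique partition $F$ of size $|F|=k$, and let $1\le i\le\min\{n,k\}$. Let $q_i(G)$ denote the $i$th largest eigenvalue of the signless Laplacian $Q(G)=D(G)+\mathcal A(G)$. (i) If $G$ is $t$ clique-regular with respect to $F$, then $q_i(G)-\lambda_i(G)\ge t$. (ii) If $G$ is $s$ clique-uniform with respect to $F$, then $q_i(G)-\lambda_i(P_G)\ge s$.
   Context: All graphs are finite and simple; $\mathcal A(G)$ is the adjacency matrix, $D(G)$ the diagonal matrix of vertex degrees, and $\lambda_i(\cdot)$ denotes the $i$th largest adjacency eigenvalue. A clique partition of $G$ is a set $F=\{C_1,\dots,C_k\}$ of cliques such that every edge lies in exactly one $C_j$. The clique-degree of a vertex is the number of cliques of $F$ containing it; $G$ is $t$ clique-regular if every clique-degree equals $t$, and $s$ clique-uniform if $|C_j|=s$ for all $j$. The clique partition graph $P_G$ has vertex set $\{1,\dots,k\}$ with $i\neq j$ adjacent iff $C_i\cap C_j\neq\emptyset$. *)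

theory Defs
  imports Complex_Main "Jordan_Normal_Form.Char_Poly"
begin

definition simple_graph :: "nat \<Rightarrow> nat set set \<Rightarrow> bool" where
  "simple_graph n E \<longleftrightarrow> (\<forall>e\<in>E. \<exists>u v. e = {u, v} \<and> u < n \<and> v < n \<and> u \<noteq> v)"

definition adj_mat :: "nat \<Rightarrow> nat set set \<Rightarrow> real mat" where
  "adj_mat n E = mat n n (\<lambda>(i, j). if {i, j} \<in> E then 1 else 0)"

definition degree :: "nat set set \<Rightarrow> nat \<Rightarrow> nat" where
  "degree E v = card {u. {u, v} \<in> E}"

definition deg_mat :: "nat \<Rightarrow> nat set set \<Rightarrow> real mat" where
  "deg_mat n E = mat n n (\<lambda>(i, j). if i = j then real (degree E i) else 0)"

definition signless_laplacian :: "nat \<Rightarrow> nat set set \<Rightarrow> real mat" where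
  "signless_laplacian n E = deg_mat n E + adj_mat n E"

definition is_clique :: "nat set set \<Rightarrow> nat set \<Rightarrow> bool" where
  "is_clique E C \<longleftrightarrow> (\<forall>u\<in>C. \<forall>v\<in>C. u \<noteq> v \<longrightarrow> {u, v} \<in> E)"

definition clique_partition :: "nat \<Rightarrow> nat set set \<Rightarrow> nat set list \<Rightarrow> bool" where
  "clique_partition n E F \<longleftrightarrow> distinct F \<and>
     (\<forall>C\<in>set F. C \<subseteq> {..<n} \<and> card C \<ge> 2 \<and> is_clique E C) \<and>
     (\<forall>e\<in>E. \<exists>!C. C \<in> set F \<and> e \<subseteq> C)"

definition clique_degree :: "nat set list \<Rightarrow> nat \<Rightarrow> nat" where
  "clique_degree F v = card {C \<in> set F. v \<in> C}"

definition clique_regular :: "nat \<Rightarrow> nat set list \<Rightarrow> nat \<Rightarrow> bool" where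
  "clique_regular n F t \<longleftrightarrow> (\<forall>v<n. clique_degree F v = t)"

definition clique_uniform :: "nat set list \<Rightarrow> nat \<Rightarrow> bool" where
  "clique_uniform F s \<longleftrightarrow> (\<forall>C\<in>set F. card C = s)"

text \<open>Adjacency matrix of the clique partition graph P_G (vertex j-1 stands for C_j).\<close>
definition partition_graph_adj :: "nat set list \<Rightarrow> real mat" where
  "partition_graph_adj F = mat (length F) (length F)
     (\<lambda>(i, j). if i \<noteq> j \<and> F ! i \<inter> F ! j \<noteq> {} then 1 else 0)"

text \<open>Eigenvalues (with multiplicity) in non-increasing order: the roots of the
  characteristic polynomial (real-rooted for symmetric real matrices).\<close>
definition eigs_desc :: "real mat \<Rightarrow> real list" where
  "eigs_desc A = (THE xs. length xs = dim_row A \<and> sorted_wrt (\<ge>) xs \<and>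
      char_poly A = (\<Prod>x\<leftarrow>xs. [:- x, 1:]))"

text \<open>i-th largest eigenvalue, 1-based.\<close>
definition eig :: "real mat \<Rightarrow> nat \<Rightarrow> real" where
  "eig A i = eigs_desc A ! (i - 1)"

end

theory Submission
  imports Defs "Jordan_Normal_Form.Schur_Decomposition" "Berlekamp_Zassenhaus.Mahler_Measure"
begin

(* Let N be the vertex-clique incidence matrix of F. As every edge lies in exactly one clique,
   N N^T = D_F + A(G) with D_F the diagonal matrix of clique-degrees, and if F is s clique-uniform,
   two distinct cliques share at most one vertex, so N^T N = s I + A(P_G). Distinct cliques through v
   contain distinct neighbours of v, so D_F <= D(G). Weyl monotonicity (lambda_i(A) + c <= lambda_i(B)
   whenever B - A - c I is positive semidefinite) then yields (i), lambda_i(P_G) + s <= lambda_i(N^T N)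
   and lambda_i(N N^T) <= q_i. Finally lambda_i(N^T N) <= lambda_i(N N^T) for i <= min n k, since N
   maps the span of the top i eigenvectors of N^T N injectively onto a subspace on which the Rayleigh
   quotient of N N^T is at least lambda_i(N^T N). Both comparisons follow from the Courant-Fischer
   principle, which rests on the spectral theorem: eig is defined through the characteristic
   polynomial, and an orthonormal eigenbasis splits it into the linear factors of the eigenvalues. *)

lemma real_scalar_prod_self_pos:
  fixes x :: "real vec"
  assumes "x \<in> carrier_vec n" and "x \<noteq> 0\<^sub>v n"
  shows "x \<bullet> x > 0"
  using conjugate_square_greater_0_vec[OF assms(1)] assms(2) by simp

lemma real_scalar_prod_self_nonneg: "0 \<le> (x :: real vec) \<bullet> x"
  by (simp add: scalar_prod_def sum_nonneg)

lemma scalar_prod_self_eq_sum: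
  fixes x :: "real vec"
  assumes "x \<in> carrier_vec m"
  shows "x \<bullet> x = (\<Sum>l<m. (x $ l)\<^sup>2)"
  using assms by (simp add: scalar_prod_def atLeast0LessThan power2_eq_square)

lemma mat_diag_mult_vec:
  fixes d :: "nat \<Rightarrow> 'a :: comm_ring_1"
  assumes "a \<in> carrier_vec m"
  shows "mat_diag m d *\<^sub>v a = vec m (\<lambda>l. d l * a $ l)"
proof (rule eq_vecI)
  fix l assume "l < dim_vec (vec m (\<lambda>l. d l * a $ l))"
  then have l: "l < m" by simp
  have "row (mat_diag m d) l = d l \<cdot>\<^sub>v unit_vec m l"
    using l by (intro eq_vecI) (auto simp: mat_diag_def unit_vec_def)
  then show "(mat_diag m d *\<^sub>v a) $ l = vec m (\<lambda>l. d l * a $ l) $ l"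
    using l assms carrier_matD[OF mat_diag_dim[of m d]] by (simp add: scalar_prod_left_unit)
qed (simp add: mat_diag_def)

lemma quadratic_form_mat_diag:
  fixes a :: "real vec"
  assumes "a \<in> carrier_vec m"
  shows "a \<bullet> (mat_diag m d *\<^sub>v a) = (\<Sum>l<m. d l * (a $ l)\<^sup>2)"
  using assms by (simp add: mat_diag_mult_vec scalar_prod_def atLeast0LessThan power2_eq_square
      mult.commute mult.left_commute)

lemma orthonormal_cols_scalar_prod:
  fixes U :: "real mat"
  assumes U: "U \<in> carrier_mat n m" and UU: "transpose_mat U * U = 1\<^sub>m m"
    and p: "p \<in> carrier_vec m" and q: "q \<in> carrier_vec m"
  shows "(U *\<^sub>v p) \<bullet> (U *\<^sub>v q) = p \<bullet> q"
proof -
  have "(U *\<^sub>v p) \<bullet> (U *\<^sub>v q) = (transpose_mat U *\<^sub>v (U *\<^sub>v p)) \<bullet> q"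
    by (rule transpose_vec_mult_scalar[OF U q, symmetric]) (use U p in simp)
  also have "transpose_mat U *\<^sub>v (U *\<^sub>v p) = p"
    using U p UU by (metis assoc_mult_mat_vec carrier_matD(2) carrier_matI index_transpose_mat(2,3) one_mult_mat_vec)
  finally show ?thesis .
qed

lemma wide_mat_kernel:
  fixes A :: "'a :: idom mat"
  assumes A: "A \<in> carrier_mat n k" and nk: "n < k"
  obtains v where "v \<in> carrier_vec k" "v \<noteq> 0\<^sub>v k" "A *\<^sub>v v = 0\<^sub>v n"
proof -
  define Z where "Z = A @\<^sub>r 0\<^sub>m (k - n) k"
  have "Z \<in> carrier_mat (n + (k - n)) k" unfolding Z_def using A by (intro carrier_append_rows) auto
  then have Z: "Z \<in> carrier_mat k k" using nk by simp
  have "Z = mat\<^sub>r k k (\<lambda>i. if i = n then 0\<^sub>v k else row Z i)"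
    using A nk by (intro eq_matI) (auto simp: Z_def append_rows_def)
  then have "det Z = 0" using det_row_0[OF nk, of "\<lambda>i. row Z i"] Z by auto
  then obtain v where v: "v \<in> carrier_vec k" "v \<noteq> 0\<^sub>v k" and Zv: "Z *\<^sub>v v = 0\<^sub>v k"
    using det_0_iff_vec_prod_zero[OF Z] by blast
  have Zv_split: "Z *\<^sub>v v = (A *\<^sub>v v) @\<^sub>v (0\<^sub>m (k - n) k *\<^sub>v v)"
    unfolding Z_def by (rule mat_mult_append[OF A zero_carrier_mat v(1)])
  have "A *\<^sub>v v = 0\<^sub>v n"
  proof (rule eq_vecI)
    fix i assume "i < dim_vec (0\<^sub>v n :: 'a vec)"
    then have i: "i < n" by simp
    have "(A *\<^sub>v v) $ i = (Z *\<^sub>v v) $ i"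
      unfolding Zv_split using A i by (subst index_append_vec) auto
    then show "(A *\<^sub>v v) $ i = 0\<^sub>v n $ i" using Zv i nk by simp
  qed (use A in simp)
  with v show ?thesis by (rule that)
qed

lemma mat_pair_common_image:
  fixes Y W :: "'a :: idom mat"
  assumes Y: "Y \<in> carrier_mat n i" and W: "W \<in> carrier_mat n m" and nim: "n < i + m"
  obtains a b where "a \<in> carrier_vec i" "b \<in> carrier_vec m" "a \<noteq> 0\<^sub>v i \<or> b \<noteq> 0\<^sub>v m"
    "Y *\<^sub>v a = W *\<^sub>v b"
proof -
  define X where "X = four_block_mat Y (- W) (0\<^sub>m 0 i) (0\<^sub>m 0 m)"
  have "X \<in> carrier_mat (n + 0) (i + m)"
    unfolding X_def by (rule four_block_carrier_mat[OF Y zero_carrier_mat])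
  then obtain v where v: "v \<in> carrier_vec (i + m)" "v \<noteq> 0\<^sub>v (i + m)" and Xv: "X *\<^sub>v v = 0\<^sub>v n"
    using wide_mat_kernel[of X n "i + m"] nim by auto
  define a b where "a = vec_first v i" and "b = vec_last v m"
  have a: "a \<in> carrier_vec i" and b: "b \<in> carrier_vec m" and v_ab: "v = a @\<^sub>v b"
    unfolding a_def b_def using v by auto
  have Xv_split: "X *\<^sub>v v = (Y *\<^sub>v a + - W *\<^sub>v b) @\<^sub>v (0\<^sub>m 0 i *\<^sub>v a + 0\<^sub>m 0 m *\<^sub>v b)"
    unfolding X_def v_ab
    by (rule four_block_mat_mult_vec[OF Y uminus_carrier_mat[OF W] zero_carrier_mat zero_carrier_mat a b])
  have "Y *\<^sub>v a = W *\<^sub>v b"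
  proof (rule eq_vecI)
    fix r assume "r < dim_vec (W *\<^sub>v b)"
    then have r: "r < n" using W by simp
    have "(Y *\<^sub>v a + - W *\<^sub>v b) $ r = (X *\<^sub>v v) $ r"
      unfolding Xv_split using Y W r a b by (subst index_append_vec) auto
    then show "(Y *\<^sub>v a) $ r = (W *\<^sub>v b) $ r" using Xv r Y W a b by simp
  qed (use Y W in simp)
  moreover have "a \<noteq> 0\<^sub>v i \<or> b \<noteq> 0\<^sub>v m"
    using v(2) unfolding v_ab by (auto intro!: eq_vecI)
  ultimately show ?thesis using a b that by blast
qed

lemma real_symmetric_eigenvalue_real:
  fixes M :: "real mat"
  assumes M: "M \<in> carrier_mat n n" and sym: "transpose_mat M = M"
    and ev: "eigenvalue (map_mat complex_of_real M) z"
  shows "z \<in> \<real>"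
proof -
  let ?M = "map_mat complex_of_real M"
  have Mc: "?M \<in> carrier_mat n n" using M by simp
  obtain w where w: "w \<in> carrier_vec n" and w0: "w \<noteq> 0\<^sub>v n" and Mw: "?M *\<^sub>v w = z \<cdot>\<^sub>v w"
    using ev M unfolding eigenvalue_def eigenvector_def by auto
  let ?w' = "conjugate w"
  have w': "?w' \<in> carrier_vec n" using w by simp
  have "conjugate (row ?M j \<bullet> w) = row ?M j \<bullet> ?w'" if "j < n" for j
  proof -
    have "conjugate (row ?M j) = row ?M j" by (intro eq_vecI) (use M that in auto)
    moreover have "row ?M j \<in> carrier_vec n" using Mc by (simp add: carrier_vecI)
    ultimately show ?thesis using conjugate_sprod_vec[of "row ?M j" n w] w by simp
  qed
  then have conj_Mw: "conjugate (?M *\<^sub>v w) = ?M *\<^sub>v ?w'"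
    by (intro eq_vecI) (use M in auto)
  have "z * (w \<bullet>c w) = (?M *\<^sub>v w) \<bullet>c w"
    unfolding Mw using w by simp
  also have "\<dots> = ?w' \<bullet> (?M *\<^sub>v w)"
    by (rule comm_scalar_prod[of _ n]) (use Mc w in auto)
  also have "\<dots> = (transpose_mat ?M *\<^sub>v ?w') \<bullet> w"
    by (rule transpose_vec_mult_scalar[symmetric, OF Mc w w'])
  also have "transpose_mat ?M = ?M"
    using sym by (simp add: map_mat_transpose)
  also have "(?M *\<^sub>v ?w') \<bullet> w = cnj z * (w \<bullet>c w)"
    unfolding conj_Mw[symmetric] Mw conjugate_smult_vec
    using w by (simp add: comm_scalar_prod[of ?w' n w])
  finally have "z * (w \<bullet>c w) = cnj z * (w \<bullet>c w)" .
  moreover have "w \<bullet>c w \<noteq> 0" using w w0 by simp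
  ultimately show ?thesis by (simp add: Reals_cnj_iff)
qed

lemma real_symmetric_unit_eigenvector:
  fixes M :: "real mat"
  assumes M: "M \<in> carrier_mat n n" and sym: "transpose_mat M = M" and n: "0 < n"
  obtains r v where "v \<in> carrier_vec n" "v \<bullet> v = 1" "M *\<^sub>v v = r \<cdot>\<^sub>v v"
proof -
  let ?M = "map_mat complex_of_real M"
  obtain zs where cp: "char_poly ?M = (\<Prod>z\<leftarrow>zs. [:- z, 1:])" and "length zs = n"
    using char_poly_factorized[of ?M n] M by auto
  then obtain z where "z \<in> set zs" using n by (cases zs) auto
  then have root: "poly (char_poly ?M) z = 0"
    unfolding cp by (simp add: poly_prod_list_zero_iff)
  then have "z \<in> \<real>"
    using real_symmetric_eigenvalue_real[OF M sym] eigenvalue_root_char_poly[of ?M n] M by simp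
  then obtain r where z: "z = complex_of_real r" by (auto elim: Reals_cases)
  have "complex_of_real (poly (char_poly M) r) = poly (char_poly ?M) z"
    unfolding z of_real_hom.char_poly_hom[OF M] by (simp add: of_real_hom.poly_map_poly)
  then have "eigenvalue M r"
    using root eigenvalue_root_char_poly[OF M] by simp
  then obtain u where u: "u \<in> carrier_vec n" "u \<noteq> 0\<^sub>v n" and Mu: "M *\<^sub>v u = r \<cdot>\<^sub>v u"
    using M unfolding eigenvalue_def eigenvector_def by auto
  have uu: "u \<bullet> u > 0" by (rule real_scalar_prod_self_pos[OF u])
  define v where "v = (1 / sqrt (u \<bullet> u)) \<cdot>\<^sub>v u"
  have "v \<in> carrier_vec n" unfolding v_def using u by simp
  moreover have "v \<bullet> v = 1"
    unfolding v_def using u uu by (simp add: power2_eq_square[symmetric] power_divide)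
  moreover have "M *\<^sub>v v = r \<cdot>\<^sub>v v"
    unfolding v_def using M u Mu by (simp add: mult_mat_vec smult_smult_assoc mult.commute)
  ultimately show ?thesis by (rule that)
qed

definition orthonormal_vecs :: "nat \<Rightarrow> real vec list \<Rightarrow> bool" where
  "orthonormal_vecs n vs \<longleftrightarrow> set vs \<subseteq> carrier_vec n \<and>
     (\<forall>i<length vs. \<forall>j<length vs. vs ! i \<bullet> vs ! j = (if i = j then 1 else 0))"

lemma orthonormal_completion:
  assumes v: "v \<in> carrier_vec n" and vv: "v \<bullet> v = 1"
  obtains us where "length us = n" "orthonormal_vecs n us" "hd us = v"
proof -
  interpret cof_vec_space n "TYPE(real)" .
  have v0: "v \<noteq> 0\<^sub>v n" using vv v by auto
  note bc = basis_completion[OF v v0]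
  define ws where "ws = gram_schmidt n (basis_completion v)"
  note gs = gram_schmidt_result[OF bc(2) bc(4) bc(5) ws_def]
  have n: "0 < n" using v v0 by (metis carrier_vecD eq_vecI index_zero_vec(2) less_nat_zero_code neq0_conv)
  have lws: "length ws = n" using gs bc by simp
  have hws: "hd ws = v"
    using bc(6,7) n unfolding ws_def by (cases "basis_completion v") (auto simp: v)
  have ws: "ws ! i \<in> carrier_vec n" if "i < n" for i using gs(3) lws that by auto
  have orth: "ws ! i \<bullet> ws ! j = 0 \<longleftrightarrow> i \<noteq> j" if "i < n" "j < n" for i j
    using gs(2) lws that unfolding corthogonal_def by simp
  have pos: "ws ! i \<bullet> ws ! i > 0" if "i < n" for i
    using real_scalar_prod_self_pos[OF ws[OF that]] orth[OF that that] by fastforce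
  define us where "us = map (\<lambda>w. (1 / sqrt (w \<bullet> w)) \<cdot>\<^sub>v w) ws"
  have "us ! i \<bullet> us ! j = (if i = j then 1 else 0)" if ij: "i < n" "j < n" for i j
  proof -
    have "us ! i \<bullet> us ! j = (ws ! i \<bullet> ws ! j) / (sqrt (ws ! i \<bullet> ws ! i) * sqrt (ws ! j \<bullet> ws ! j))"
      unfolding us_def using ij lws ws[OF ij(1)] ws[OF ij(2)] by simp
    then show ?thesis
      using orth[OF ij] pos[OF ij(1)] by (auto simp: real_sqrt_mult[symmetric])
  qed
  moreover have "set us \<subseteq> carrier_vec n" unfolding us_def using gs(3) by auto
  moreover have "hd us = v" unfolding us_def using hws vv lws n by (cases ws) auto
  moreover have "length us = n" unfolding us_def using lws by simp
  ultimately show ?thesis using that unfolding orthonormal_vecs_def by auto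
qed

lemma mat_of_cols_orthonormal:
  assumes "orthonormal_vecs n vs"
  shows "transpose_mat (mat_of_cols n vs) * mat_of_cols n vs = 1\<^sub>m (length vs)"
  using assms unfolding orthonormal_vecs_def by (intro eq_matI) (auto simp: subsetD)

definition eigenbasis :: "real mat \<Rightarrow> nat \<Rightarrow> real vec list \<Rightarrow> real list \<Rightarrow> bool" where
  "eigenbasis M n vs es \<longleftrightarrow> length vs = n \<and> length es = n \<and> orthonormal_vecs n vs \<and>
     (\<forall>j<n. M *\<^sub>v vs ! j = es ! j \<cdot>\<^sub>v vs ! j)"

lemma eigenbasis_orthogonal_conj:
  fixes M U :: "real mat"
  assumes M: "M \<in> carrier_mat n n" and U: "U \<in> carrier_mat n n"
    and UU: "transpose_mat U * U = 1\<^sub>m n"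
    and eb: "eigenbasis (transpose_mat U * (M * U)) n ps es"
  shows "eigenbasis M n (map (\<lambda>p. U *\<^sub>v p) ps) es"
proof -
  have ps: "ps ! j \<in> carrier_vec n" if "j < n" for j
    using eb that unfolding eigenbasis_def orthonormal_vecs_def by auto
  have UUt: "U * transpose_mat U = 1\<^sub>m n"
    by (rule mat_mult_left_right_inverse[OF _ U UU]) (use U in auto)
  have "M *\<^sub>v (U *\<^sub>v p) = U *\<^sub>v ((transpose_mat U * (M * U)) *\<^sub>v p)" if p: "p \<in> carrier_vec n" for p
  proof -
    have "U * (transpose_mat U * (M * U)) = (U * transpose_mat U) * (M * U)"
      by (rule assoc_mult_mat[symmetric]) (use U M in auto)
    also have "\<dots> = M * U" unfolding UUt using M U by simp
    finally show ?thesis using M U p by (metis assoc_mult_mat_vec mult_carrier_mat transpose_carrier_mat)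
  qed
  note MU = this
  let ?vs = "map (\<lambda>p. U *\<^sub>v p) ps"
  have len: "length ps = n" "length es = n" using eb unfolding eigenbasis_def by auto
  show ?thesis
    unfolding eigenbasis_def orthonormal_vecs_def
  proof (intro conjI allI impI subsetI)
    show "length ?vs = n" "length es = n" using len by simp_all
    show "v \<in> carrier_vec n" if "v \<in> set ?vs" for v
      using that ps U len by (auto simp: in_set_conv_nth)
    fix i j assume "i < length ?vs" "j < length ?vs"
    then have ij: "i < n" "j < n" using len by simp_all
    have "?vs ! i \<bullet> ?vs ! j = ps ! i \<bullet> ps ! j"
      using orthonormal_cols_scalar_prod[OF U UU ps[OF ij(1)] ps[OF ij(2)]] ij len by simp
    also have "\<dots> = (if i = j then 1 else 0)"
      using eb ij unfolding eigenbasis_def orthonormal_vecs_def by simp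
    finally show "?vs ! i \<bullet> ?vs ! j = (if i = j then 1 else 0)" .
  next
    fix j assume j: "j < n"
    have "M *\<^sub>v ?vs ! j = U *\<^sub>v ((transpose_mat U * (M * U)) *\<^sub>v ps ! j)"
      using MU[OF ps[OF j]] len j by simp
    also have "(transpose_mat U * (M * U)) *\<^sub>v ps ! j = es ! j \<cdot>\<^sub>v ps ! j"
      using eb j unfolding eigenbasis_def by blast
    finally show "M *\<^sub>v ?vs ! j = es ! j \<cdot>\<^sub>v ?vs ! j"
      using mult_mat_vec[OF U ps[OF j]] len j by simp
  qed
qed

lemma mult_mat_vec_vCons_block:
  fixes A :: "real mat"
  assumes A: "A \<in> carrier_mat (Suc m) (Suc m)" and sym: "transpose_mat A = A"
    and col0: "\<And>i. i < Suc m \<Longrightarrow> A $$ (i, 0) = (if i = 0 then r else 0)"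
    and u: "u \<in> carrier_vec m"
  shows "A *\<^sub>v vCons a u = vCons (r * a) (mat m m (\<lambda>(i, j). A $$ (Suc i, Suc j)) *\<^sub>v u)"
    (is "_ = vCons _ (?A' *\<^sub>v u)")
proof (rule eq_vecI)
  fix i assume "i < dim_vec (vCons (r * a) (?A' *\<^sub>v u))"
  then have i: "i < Suc m" by simp
  have row_i: "row A i = vCons (A $$ (i, 0)) (vec m (\<lambda>j. A $$ (i, Suc j)))"
    using A i by (auto simp: row_def vec_Suc o_def)
  show "(A *\<^sub>v vCons a u) $ i = vCons (r * a) (?A' *\<^sub>v u) $ i"
  proof (cases i)
    case 0
    have "A $$ (0, Suc j) = 0" if "j < m" for j
      using col0[of "Suc j"] sym that A by (metis Suc_less_eq carrier_matD index_transpose_mat(1) nat.distinct(1) zero_less_Suc)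
    then have "vec m (\<lambda>j. A $$ (0, Suc j)) = 0\<^sub>v m" by (intro eq_vecI) auto
    then show ?thesis using 0 A u row_i col0[OF i] by simp
  next
    case (Suc i')
    then have i': "i' < m" using i by simp
    have "vec m (\<lambda>j. A $$ (Suc i', Suc j)) = row ?A' i'" using i' by (intro eq_vecI) auto
    then show ?thesis using Suc A u i' row_i col0[OF i] by simp
  qed
qed (use A in simp)

lemma eigenbasis_block:
  fixes A :: "real mat"
  assumes A: "A \<in> carrier_mat (Suc m) (Suc m)" and sym: "transpose_mat A = A"
    and col0: "\<And>i. i < Suc m \<Longrightarrow> A $$ (i, 0) = (if i = 0 then r else 0)"
    and eb: "eigenbasis (mat m m (\<lambda>(i, j). A $$ (Suc i, Suc j))) m vs es"
  shows "eigenbasis A (Suc m) (vCons 1 (0\<^sub>v m) # map (vCons 0) vs) (r # es)"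
proof -
  let ?ps = "vCons 1 (0\<^sub>v m) # map (vCons 0) vs"
  have len: "length vs = m" "length es = m" using eb unfolding eigenbasis_def by auto
  have vs: "vs ! j \<in> carrier_vec m" if "j < m" for j
    using eb that unfolding eigenbasis_def orthonormal_vecs_def by auto
  have "?ps ! i \<bullet> ?ps ! j = (if i = j then 1 else 0)" if "i < Suc m" "j < Suc m" for i j
    using that vs len eb unfolding eigenbasis_def orthonormal_vecs_def by (cases i; cases j) auto
  moreover have "A *\<^sub>v ?ps ! j = (r # es) ! j \<cdot>\<^sub>v ?ps ! j" if "j < Suc m" for j
  proof (cases j)
    case 0
    then show ?thesis
      using mult_mat_vec_vCons_block[OF A sym col0, of "0\<^sub>v m" 1]
      by (auto simp: zero_vec_Suc[symmetric] intro!: eq_vecI simp: vec_index_vCons)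
  next
    case (Suc j')
    then have j': "j' < m" using that by simp
    then show ?thesis
      using Suc mult_mat_vec_vCons_block[OF A sym col0 vs[OF j'], of 0] eb len
      unfolding eigenbasis_def by (auto intro!: eq_vecI simp: vec_index_vCons)
  qed
  moreover have "set ?ps \<subseteq> carrier_vec (Suc m)"
    using eb unfolding eigenbasis_def orthonormal_vecs_def by auto
  ultimately show ?thesis
    using len unfolding eigenbasis_def orthonormal_vecs_def by auto
qed

lemma orthonormal_basis_conj_first_col:
  fixes M :: "real mat"
  assumes M: "M \<in> carrier_mat n n" and sym: "transpose_mat M = M"
    and on: "orthonormal_vecs n us" and len: "length us = n"
    and Mv: "M *\<^sub>v us ! 0 = r \<cdot>\<^sub>v us ! 0"
  defines "A \<equiv> transpose_mat (mat_of_cols n us) * (M * mat_of_cols n us)"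
  shows "transpose_mat A = A" and "\<And>i. i < n \<Longrightarrow> A $$ (i, 0) = (if i = 0 then r else 0)"
proof -
  define U where "U = mat_of_cols n us"
  have us: "us ! j \<in> carrier_vec n" if "j < n" for j
    using on len that unfolding orthonormal_vecs_def by auto
  have U: "U \<in> carrier_mat n n" unfolding U_def using len by auto
  have A: "A \<in> carrier_mat n n" unfolding A_def U_def[symmetric] using U M by auto
  have colU: "col U j = us ! j" if "j < n" for j
    unfolding U_def using that len us by simp
  have Aij: "A $$ (i, j) = us ! i \<bullet> (M *\<^sub>v us ! j)" if "i < n" "j < n" for i j
    unfolding A_def U_def[symmetric] using that M U colU by (simp add: mult_mat_vec_def)
  have "A $$ (i, j) = A $$ (j, i)" if "i < n" "j < n" for i j
  proof -
    have "us ! i \<bullet> (M *\<^sub>v us ! j) = (transpose_mat M *\<^sub>v us ! i) \<bullet> us ! j"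
      by (rule transpose_vec_mult_scalar[OF M us[OF that(2)] us[OF that(1)], symmetric])
    also have "\<dots> = us ! j \<bullet> (M *\<^sub>v us ! i)"
      unfolding sym by (rule comm_scalar_prod[of _ n]) (use M us that in auto)
    finally show ?thesis using Aij that by simp
  qed
  then show "transpose_mat A = A" using A by (intro eq_matI) auto
  fix i assume i: "i < n"
  have "us ! i \<bullet> us ! 0 = (if i = 0 then 1 else 0)"
    using on len i unfolding orthonormal_vecs_def by auto
  moreover have "us ! 0 \<in> carrier_vec n" using us i by simp
  ultimately show "A $$ (i, 0) = (if i = 0 then r else 0)"
    using Aij[OF i] Mv us[OF i] i by (auto simp: scalar_prod_smult_right)
qed

theorem real_symmetric_eigenbasis:
  fixes M :: "real mat"
  assumes "M \<in> carrier_mat n n" and "transpose_mat M = M"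
  obtains vs es where "eigenbasis M n vs es"
  using assms
proof (induction n arbitrary: M thesis)
  case 0
  then show ?case by (auto simp: eigenbasis_def orthonormal_vecs_def)
next
  case (Suc m)
  note M = Suc.prems(2) and sym = Suc.prems(3)
  obtain r v where v: "v \<in> carrier_vec (Suc m)" "v \<bullet> v = 1" and Mv: "M *\<^sub>v v = r \<cdot>\<^sub>v v"
    using real_symmetric_unit_eigenvector[OF M sym] by blast
  obtain us where len: "length us = Suc m" and on: "orthonormal_vecs (Suc m) us" and hd: "hd us = v"
    using orthonormal_completion[OF v] by blast
  have Mus: "M *\<^sub>v us ! 0 = r \<cdot>\<^sub>v us ! 0" using hd len Mv by (cases us) auto
  define U where "U = mat_of_cols (Suc m) us"
  have U: "U \<in> carrier_mat (Suc m) (Suc m)" unfolding U_def using len by auto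
  have UU: "transpose_mat U * U = 1\<^sub>m (Suc m)"
    unfolding U_def using mat_of_cols_orthonormal[OF on] len by simp
  define A where "A = transpose_mat U * (M * U)"
  have A: "A \<in> carrier_mat (Suc m) (Suc m)" unfolding A_def using U M by auto
  note conj = orthonormal_basis_conj_first_col[OF M sym on len Mus, folded U_def A_def]
  let ?A' = "mat m m (\<lambda>(i, j). A $$ (Suc i, Suc j))"
  have "transpose_mat ?A' = ?A'"
    using conj(1) A by (intro eq_matI) (auto, metis Suc_less_eq carrier_matD index_transpose_mat(1))
  then obtain ps es where "eigenbasis ?A' m ps es"
    using Suc.IH[of ?A'] by auto
  then have "eigenbasis A (Suc m) (vCons 1 (0\<^sub>v m) # map (vCons 0) ps) (r # es)"
    using eigenbasis_block[OF A conj] by simp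
  then show ?case
    using eigenbasis_orthogonal_conj[OF M U UU] Suc.prems(1) unfolding A_def by blast
qed

lemma eigenbasis_cols:
  fixes M :: "real mat"
  assumes M: "M \<in> carrier_mat n n" and eb: "eigenbasis M n vs es"
    and J: "distinct J" "set J \<subseteq> {..<n}"
  defines "W \<equiv> mat_of_cols n (map (\<lambda>l. vs ! l) J)"
  shows "W \<in> carrier_mat n (length J)"
    and "transpose_mat W * W = 1\<^sub>m (length J)"
    and "M * W = W * mat_diag (length J) (\<lambda>l. es ! (J ! l))"
proof -
  have J_lt: "J ! l < n" if "l < length J" for l using J(2) that nth_mem by blast
  have vs: "vs ! j \<in> carrier_vec n" if "j < n" for j
    using eb that unfolding eigenbasis_def orthonormal_vecs_def by auto
  show W: "W \<in> carrier_mat n (length J)"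
    unfolding W_def using mat_of_cols_carrier(1)[of n "map (\<lambda>l. vs ! l) J"] by simp
  have "set (map (\<lambda>l. vs ! l) J) \<subseteq> carrier_vec n" using vs J(2) by auto
  then have "orthonormal_vecs n (map (\<lambda>l. vs ! l) J)"
    using eb J J_lt unfolding eigenbasis_def orthonormal_vecs_def
    by (auto simp: nth_eq_iff_index_eq)
  then show "transpose_mat W * W = 1\<^sub>m (length J)"
    unfolding W_def using mat_of_cols_orthonormal by fastforce
  show "M * W = W * mat_diag (length J) (\<lambda>l. es ! (J ! l))"
  proof (rule eq_matI)
    fix i j assume "i < dim_row (W * mat_diag (length J) (\<lambda>l. es ! (J ! l)))"
      "j < dim_col (W * mat_diag (length J) (\<lambda>l. es ! (J ! l)))"
    then have i: "i < n" and j: "j < length J" using W by (auto simp: mat_diag_def)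
    have "(M * W) $$ (i, j) = (M *\<^sub>v vs ! (J ! j)) $ i"
      unfolding W_def using M i j J_lt vs by simp
    also have "\<dots> = vs ! (J ! j) $ i * es ! (J ! j)"
      using eb J_lt[OF j] vs[OF J_lt[OF j]] i unfolding eigenbasis_def by simp
    also have "\<dots> = (W * mat_diag (length J) (\<lambda>l. es ! (J ! l))) $$ (i, j)"
      unfolding mat_diag_mult_right[OF W] unfolding W_def using i j by (simp add: mat_of_cols_def)
    finally show "(M * W) $$ (i, j) = (W * mat_diag (length J) (\<lambda>l. es ! (J ! l))) $$ (i, j)" .
  qed (use M W in \<open>auto simp: mat_diag_def\<close>)
qed

lemma eigenbasis_char_poly:
  assumes M: "M \<in> carrier_mat n n" and eb: "eigenbasis M n vs es"
  shows "char_poly M = (\<Prod>e\<leftarrow>es. [:- e, 1:])"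
proof -
  have len: "length vs = n" "length es = n" using eb unfolding eigenbasis_def by auto
  define V where "V = mat_of_cols n (map (\<lambda>l. vs ! l) [0..<n])"
  define D where "D = mat_diag n (\<lambda>l. es ! l)"
  have "set [0..<n] \<subseteq> {..<n}" by auto
  note cols = eigenbasis_cols[OF M eb distinct_upt this, folded V_def]
  have "mat_diag n (\<lambda>l. es ! ([0..<n] ! l)) = D"
    unfolding D_def mat_diag_def by (intro eq_matI) auto
  then have V: "V \<in> carrier_mat n n" and VV: "transpose_mat V * V = 1\<^sub>m n" and MV: "M * V = V * D"
    using cols by auto
  have VVt: "V * transpose_mat V = 1\<^sub>m n"
    by (rule mat_mult_left_right_inverse[OF _ V VV]) (use V in auto)
  have "M = M * (V * transpose_mat V)" unfolding VVt using M by simp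
  also have "\<dots> = M * V * transpose_mat V"
    by (rule assoc_mult_mat[symmetric]) (use M V in auto)
  also have "\<dots> = V * D * transpose_mat V" unfolding MV ..
  finally have "similar_mat_wit M D V (transpose_mat V)"
    by (intro similar_mat_witI[of _ _ n]) (use M V VV VVt in \<open>auto simp: D_def\<close>)
  then have "char_poly M = char_poly D"
    by (intro char_poly_similar) (auto simp: similar_mat_def)
  also have "\<dots> = (\<Prod>e\<leftarrow>diag_mat D. [:- e, 1:])"
    by (rule char_poly_upper_triangular[of _ n]) (auto simp: D_def upper_triangular_def mat_diag_def)
  also have "diag_mat D = es"
    using len by (intro nth_equalityI) (auto simp: D_def diag_mat_def mat_diag_def)
  finally show ?thesis .
qed

lemma eigs_desc_char_poly:
  assumes M: "M \<in> carrier_mat n n"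
    and cp: "char_poly M = (\<Prod>e\<leftarrow>es. [:- e, 1:])" and len: "length es = n"
  shows "eigs_desc M = rev (sort es)"
  unfolding eigs_desc_def
proof (rule the_equality)
  have "mset (map (\<lambda>e. [:- e, 1:]) (rev (sort es))) = mset (map (\<lambda>e. [:- e, 1::real:]) es)"
    by (simp only: mset_map mset_rev mset_sort)
  then have "(\<Prod>e\<leftarrow>rev (sort es). [:- e, 1:]) = (\<Prod>e\<leftarrow>es. [:- e, 1::real:])"
    by (metis prod_mset_prod_list)
  then show "length (rev (sort es)) = dim_row M \<and> sorted_wrt (\<ge>) (rev (sort es)) \<and>
      char_poly M = (\<Prod>e\<leftarrow>rev (sort es). [:- e, 1:])"
    using M len cp by (simp add: sorted_wrt_rev)
next
  fix xs assume xs: "length xs = dim_row M \<and> sorted_wrt (\<ge>) xs \<and> char_poly M = (\<Prod>x\<leftarrow>xs. [:- x, 1:])"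
  then have "mset xs = mset es"
    using cp by (intro reconstruct_poly_monic_defines_mset) simp
  moreover have "sorted (rev xs)" using xs by (simp add: sorted_wrt_rev)
  ultimately have "sort es = rev xs" by (intro properties_for_sort) auto
  then show "xs = rev (sort es)" by simp
qed

lemma eig_eigenbasis:
  assumes "M \<in> carrier_mat n n" and "eigenbasis M n vs es"
  shows "eig M i = rev (sort es) ! (i - 1)"
  using assms eigs_desc_char_poly[OF assms(1) eigenbasis_char_poly[OF assms]]
  unfolding eig_def eigenbasis_def by simp

lemma length_filter_sorted_desc:
  fixes es :: "real list"
  assumes k: "k < length es"
  defines "x \<equiv> rev (sort es) ! k"
  shows "Suc k \<le> length (filter (\<lambda>l. x \<le> es ! l) [0..<length es])"
    and "length es - k \<le> length (filter (\<lambda>l. es ! l \<le> x) [0..<length es])"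
proof -
  define ds where "ds = rev (sort es)"
  have count: "length (filter (\<lambda>l. P (es ! l)) [0..<length es]) = length (filter P ds)" for P
  proof -
    have "length (filter (\<lambda>l. P (es ! l)) [0..<length es])
        = length (filter P (map (\<lambda>l. es ! l) [0..<length es]))"
      by (simp add: filter_map comp_def)
    also have "\<dots> = length (filter P es)" by (simp add: map_nth)
    also have "mset (filter P es) = mset (filter P ds)" by (simp add: ds_def)
    then have "length (filter P es) = length (filter P ds)" by (metis size_mset)
    finally show ?thesis .
  qed
  have sorted: "sorted_wrt (\<ge>) ds" and len: "length ds = length es"
    unfolding ds_def by (simp_all add: sorted_wrt_rev)
  have x: "x = ds ! k" unfolding x_def ds_def ..
  have split: "length (filter P ds) = length (filter P (take j ds)) + length (filter P (drop j ds))"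
    for P j
  proof -
    have "filter P ds = filter P (take j ds) @ filter P (drop j ds)"
      by (simp flip: filter_append)
    then show ?thesis by simp
  qed
  have "x \<le> ds ! j" if "j \<le> k" for j
    using sorted that k len unfolding x by (cases "j = k") (auto simp: sorted_wrt_iff_nth_less)
  then have "filter (\<lambda>y. x \<le> y) (take (Suc k) ds) = take (Suc k) ds"
    by (intro filter_True) (auto simp: in_set_conv_nth)
  then have "Suc k \<le> length (filter (\<lambda>y. x \<le> y) ds)"
    using split[of "\<lambda>y. x \<le> y" "Suc k"] k len by simp
  then show "Suc k \<le> length (filter (\<lambda>l. x \<le> es ! l) [0..<length es])"
    using count[of "\<lambda>y. x \<le> y"] by simp
  have "ds ! j \<le> x" if "k \<le> j" "j < length ds" for j
    using sorted that unfolding x by (cases "j = k") (auto simp: sorted_wrt_iff_nth_less)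
  then have "filter (\<lambda>y. y \<le> x) (drop k ds) = drop k ds"
    by (intro filter_True) (auto simp: in_set_conv_nth)
  then have "length es - k \<le> length (filter (\<lambda>y. y \<le> x) ds)"
    using split[of "\<lambda>y. y \<le> x" k] len by simp
  then show "length es - k \<le> length (filter (\<lambda>l. es ! l \<le> x) [0..<length es])"
    using count[of "\<lambda>y. y \<le> x"] by simp
qed

lemma quadratic_form_eigen_cols:
  fixes M W :: "real mat"
  assumes M: "M \<in> carrier_mat n n" and W: "W \<in> carrier_mat n m"
    and WW: "transpose_mat W * W = 1\<^sub>m m" and MW: "M * W = W * mat_diag m d"
    and b: "b \<in> carrier_vec m"
  shows "(W *\<^sub>v b) \<bullet> (M *\<^sub>v (W *\<^sub>v b)) = (\<Sum>l<m. d l * (b $ l)\<^sup>2)"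
proof -
  have Db: "mat_diag m d *\<^sub>v b \<in> carrier_vec m" by (rule mult_mat_vec_carrier[OF mat_diag_dim b])
  have "M *\<^sub>v (W *\<^sub>v b) = W *\<^sub>v (mat_diag m d *\<^sub>v b)"
    using M W b MW by (metis assoc_mult_mat_vec mat_diag_dim)
  then have "(W *\<^sub>v b) \<bullet> (M *\<^sub>v (W *\<^sub>v b)) = b \<bullet> (mat_diag m d *\<^sub>v b)"
    using orthonormal_cols_scalar_prod[OF W WW b Db] by simp
  also have "\<dots> = (\<Sum>l<m. d l * (b $ l)\<^sup>2)" by (rule quadratic_form_mat_diag[OF b])
  finally show ?thesis .
qed

lemma quadratic_form_eigen_cols_le:
  fixes M W :: "real mat"
  assumes M: "M \<in> carrier_mat n n" and W: "W \<in> carrier_mat n m"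
    and WW: "transpose_mat W * W = 1\<^sub>m m" and MW: "M * W = W * mat_diag m d"
    and b: "b \<in> carrier_vec m" and le: "\<And>l. l < m \<Longrightarrow> d l \<le> c"
  shows "(W *\<^sub>v b) \<bullet> (M *\<^sub>v (W *\<^sub>v b)) \<le> c * ((W *\<^sub>v b) \<bullet> (W *\<^sub>v b))"
proof -
  have "(\<Sum>l<m. d l * (b $ l)\<^sup>2) \<le> (\<Sum>l<m. c * (b $ l)\<^sup>2)"
    by (rule sum_mono) (use le in \<open>auto intro: mult_right_mono\<close>)
  then show ?thesis
    unfolding quadratic_form_eigen_cols[OF M W WW MW b] orthonormal_cols_scalar_prod[OF W WW b b]
      scalar_prod_self_eq_sum[OF b] by (simp add: sum_distrib_left)
qed

lemma quadratic_form_eigen_cols_ge: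
  fixes M W :: "real mat"
  assumes M: "M \<in> carrier_mat n n" and W: "W \<in> carrier_mat n m"
    and WW: "transpose_mat W * W = 1\<^sub>m m" and MW: "M * W = W * mat_diag m d"
    and b: "b \<in> carrier_vec m" and ge: "\<And>l. l < m \<Longrightarrow> c \<le> d l"
  shows "c * ((W *\<^sub>v b) \<bullet> (W *\<^sub>v b)) \<le> (W *\<^sub>v b) \<bullet> (M *\<^sub>v (W *\<^sub>v b))"
proof -
  have "(\<Sum>l<m. c * (b $ l)\<^sup>2) \<le> (\<Sum>l<m. d l * (b $ l)\<^sup>2)"
    by (rule sum_mono) (use ge in \<open>auto intro: mult_right_mono\<close>)
  then show ?thesis
    unfolding quadratic_form_eigen_cols[OF M W WW MW b] orthonormal_cols_scalar_prod[OF W WW b b]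
      scalar_prod_self_eq_sum[OF b] by (simp add: sum_distrib_left)
qed

lemma top_eigenvectors:
  fixes M :: "real mat"
  assumes M: "M \<in> carrier_mat n n" and sym: "transpose_mat M = M" and i: "1 \<le> i" "i \<le> n"
  obtains U d where "U \<in> carrier_mat n i" "transpose_mat U * U = 1\<^sub>m i"
    "M * U = U * mat_diag i d" "\<And>l. l < i \<Longrightarrow> eig M i \<le> d l"
proof -
  obtain vs es where eb: "eigenbasis M n vs es" using real_symmetric_eigenbasis[OF M sym] .
  have len: "length es = n" using eb unfolding eigenbasis_def by simp
  define lam where "lam = eig M i"
  have lam_es: "lam = rev (sort es) ! (i - 1)" unfolding lam_def by (rule eig_eigenbasis[OF M eb])
  define K where "K = filter (\<lambda>l. lam \<le> es ! l) [0..<n]"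
  define J where "J = take i K"
  have "i \<le> length K"
    using length_filter_sorted_desc(1)[of "i - 1" es] i len unfolding lam_es K_def by simp
  then have lenJ: "length J = i" unfolding J_def by simp
  have J: "distinct J" "set J \<subseteq> {..<n}"
    unfolding J_def K_def using set_take_subset by (fastforce intro: distinct_take)+
  have "lam \<le> es ! (J ! l)" if "l < i" for l
  proof -
    have "J ! l \<in> set K" using that lenJ unfolding J_def by (metis in_set_takeD nth_mem)
    then show ?thesis unfolding K_def by simp
  qed
  moreover note eigenbasis_cols[OF M eb J, unfolded lenJ]
  ultimately show ?thesis using that unfolding lam_def by blast
qed

lemma bottom_eigenvectors:
  fixes M :: "real mat"
  assumes M: "M \<in> carrier_mat n n" and sym: "transpose_mat M = M" and i: "1 \<le> i" "i \<le> n"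
  obtains W m d where "W \<in> carrier_mat n m" "transpose_mat W * W = 1\<^sub>m m"
    "M * W = W * mat_diag m d" "n < i + m" "\<And>l. l < m \<Longrightarrow> d l \<le> eig M i"
proof -
  obtain vs es where eb: "eigenbasis M n vs es" using real_symmetric_eigenbasis[OF M sym] .
  have len: "length es = n" using eb unfolding eigenbasis_def by simp
  define lam where "lam = eig M i"
  have lam_es: "lam = rev (sort es) ! (i - 1)" unfolding lam_def by (rule eig_eigenbasis[OF M eb])
  define J where "J = filter (\<lambda>l. es ! l \<le> lam) [0..<n]"
  have "n - (i - 1) \<le> length J"
    using length_filter_sorted_desc(2)[of "i - 1" es] i len unfolding lam_es J_def by simp
  then have "n < i + length J" using i by linarith
  moreover have J: "distinct J" "set J \<subseteq> {..<n}" unfolding J_def by auto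
  moreover have "es ! (J ! l) \<le> lam" if "l < length J" for l
    using nth_mem[OF that] unfolding J_def by simp
  moreover note eigenbasis_cols[OF M eb J]
  ultimately show ?thesis using that unfolding lam_def by blast
qed

lemma le_eig_of_subspace:
  fixes M Y :: "real mat"
  assumes M: "M \<in> carrier_mat n n" and sym: "transpose_mat M = M"
    and i: "1 \<le> i" "i \<le> n" and Y: "Y \<in> carrier_mat n i"
    and rayleigh: "\<And>a. a \<in> carrier_vec i \<Longrightarrow> a \<noteq> 0\<^sub>v i \<Longrightarrow>
      Y *\<^sub>v a \<noteq> 0\<^sub>v n \<and> c * ((Y *\<^sub>v a) \<bullet> (Y *\<^sub>v a)) \<le> (Y *\<^sub>v a) \<bullet> (M *\<^sub>v (Y *\<^sub>v a))"
  shows "c \<le> eig M i"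
proof -
  obtain W m d where W: "W \<in> carrier_mat n m" and WW: "transpose_mat W * W = 1\<^sub>m m"
    and MW: "M * W = W * mat_diag m d" and nim: "n < i + m" and d: "\<And>l. l < m \<Longrightarrow> d l \<le> eig M i"
    using bottom_eigenvectors[OF M sym i] by blast
  \<comment> \<open>the range of Y meets the span of the eigenvectors with eigenvalue at most eig M i\<close>
  obtain a b where a: "a \<in> carrier_vec i" and b: "b \<in> carrier_vec m"
    and ab: "a \<noteq> 0\<^sub>v i \<or> b \<noteq> 0\<^sub>v m" and Yab: "Y *\<^sub>v a = W *\<^sub>v b"
    using mat_pair_common_image[OF Y W nim] .
  have "a \<noteq> 0\<^sub>v i"
  proof
    assume a0: "a = 0\<^sub>v i"
    have "b \<bullet> b = (W *\<^sub>v b) \<bullet> (W *\<^sub>v b)" using orthonormal_cols_scalar_prod[OF W WW b b] ..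
    also have "W *\<^sub>v b = 0\<^sub>v n" unfolding Yab[symmetric] a0 using Y by (intro eq_vecI) auto
    finally show False using ab a0 real_scalar_prod_self_pos[OF b] by auto
  qed
  then have x0: "W *\<^sub>v b \<noteq> 0\<^sub>v n"
    and "c * ((W *\<^sub>v b) \<bullet> (W *\<^sub>v b)) \<le> (W *\<^sub>v b) \<bullet> (M *\<^sub>v (W *\<^sub>v b))"
    using rayleigh[OF a] unfolding Yab by auto
  then have "c * ((W *\<^sub>v b) \<bullet> (W *\<^sub>v b)) \<le> eig M i * ((W *\<^sub>v b) \<bullet> (W *\<^sub>v b))"
    using quadratic_form_eigen_cols_le[OF M W WW MW b d] by linarith
  then show ?thesis using real_scalar_prod_self_pos[OF _ x0] W b by simp
qed

lemma eig_shift_mono: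
  fixes A B :: "real mat"
  assumes A: "A \<in> carrier_mat n n" and symA: "transpose_mat A = A"
    and B: "B \<in> carrier_mat n n" and symB: "transpose_mat B = B"
    and i: "1 \<le> i" "i \<le> n"
    and le: "\<And>x. x \<in> carrier_vec n \<Longrightarrow> x \<bullet> (A *\<^sub>v x) + c * (x \<bullet> x) \<le> x \<bullet> (B *\<^sub>v x)"
  shows "eig A i + c \<le> eig B i"
proof -
  obtain U d where U: "U \<in> carrier_mat n i" and UU: "transpose_mat U * U = 1\<^sub>m i"
    and AU: "A * U = U * mat_diag i d" and d: "\<And>l. l < i \<Longrightarrow> eig A i \<le> d l"
    using top_eigenvectors[OF A symA i] by blast
  show ?thesis
  proof (rule le_eig_of_subspace[OF B symB i U])
    fix a :: "real vec" assume a: "a \<in> carrier_vec i" and a0: "a \<noteq> 0\<^sub>v i"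
    let ?x = "U *\<^sub>v a"
    have "?x \<bullet> ?x > 0"
      using orthonormal_cols_scalar_prod[OF U UU a a] real_scalar_prod_self_pos[OF a a0] by simp
    moreover have "eig A i * (?x \<bullet> ?x) \<le> ?x \<bullet> (A *\<^sub>v ?x)"
      by (rule quadratic_form_eigen_cols_ge[OF A U UU AU a d])
    moreover have "?x \<bullet> (A *\<^sub>v ?x) + c * (?x \<bullet> ?x) \<le> ?x \<bullet> (B *\<^sub>v ?x)"
      using U a by (intro le) simp
    ultimately show "?x \<noteq> 0\<^sub>v n \<and> (eig A i + c) * (?x \<bullet> ?x) \<le> ?x \<bullet> (B *\<^sub>v ?x)"
      by (auto simp: algebra_simps)
  qed
qed

lemma eig_nonneg_of_psd:
  fixes M :: "real mat"
  assumes M: "M \<in> carrier_mat n n" and sym: "transpose_mat M = M" and i: "1 \<le> i" "i \<le> n"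
    and psd: "\<And>x. x \<in> carrier_vec n \<Longrightarrow> 0 \<le> x \<bullet> (M *\<^sub>v x)"
  shows "0 \<le> eig M i"
proof -
  obtain U d where U: "U \<in> carrier_mat n i" and UU: "transpose_mat U * U = 1\<^sub>m i"
    and "M * U = U * mat_diag i d" and "\<And>l. l < i \<Longrightarrow> eig M i \<le> d l"
    using top_eigenvectors[OF M sym i] by blast
  show ?thesis
  proof (rule le_eig_of_subspace[OF M sym i U])
    fix a :: "real vec" assume a: "a \<in> carrier_vec i" and a0: "a \<noteq> 0\<^sub>v i"
    have "(U *\<^sub>v a) \<bullet> (U *\<^sub>v a) > 0"
      using orthonormal_cols_scalar_prod[OF U UU a a] real_scalar_prod_self_pos[OF a a0] by simp
    moreover have "0 \<le> (U *\<^sub>v a) \<bullet> (M *\<^sub>v (U *\<^sub>v a))"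
      using U a by (intro psd) simp
    ultimately show "U *\<^sub>v a \<noteq> 0\<^sub>v n \<and> 0 * ((U *\<^sub>v a) \<bullet> (U *\<^sub>v a)) \<le> (U *\<^sub>v a) \<bullet> (M *\<^sub>v (U *\<^sub>v a))"
      by auto
  qed
qed

lemma quadratic_form_gram:
  fixes N :: "real mat"
  assumes N: "N \<in> carrier_mat n k" and x: "x \<in> carrier_vec n"
  shows "x \<bullet> ((N * transpose_mat N) *\<^sub>v x) = (transpose_mat N *\<^sub>v x) \<bullet> (transpose_mat N *\<^sub>v x)"
proof -
  have "(N * transpose_mat N) *\<^sub>v x = N *\<^sub>v (transpose_mat N *\<^sub>v x)"
    by (rule assoc_mult_mat_vec) (use N x in auto)
  then show ?thesis
    using transpose_vec_mult_scalar[OF N _ x, of "transpose_mat N *\<^sub>v x"] N x by simp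
qed

lemma gram_image_rayleigh:
  fixes N U :: "real mat"
  assumes N: "N \<in> carrier_mat n k" and U: "U \<in> carrier_mat k i"
    and UU: "transpose_mat U * U = 1\<^sub>m i" and GU: "(transpose_mat N * N) * U = U * mat_diag i d"
    and lam: "0 < lam" and d: "\<And>l. l < i \<Longrightarrow> lam \<le> d l"
    and a: "a \<in> carrier_vec i" and a0: "a \<noteq> 0\<^sub>v i"
  defines "x \<equiv> N *\<^sub>v (U *\<^sub>v a)"
  shows "x \<noteq> 0\<^sub>v n \<and> lam * (x \<bullet> x) \<le> x \<bullet> ((N * transpose_mat N) *\<^sub>v x)"
proof -
  define G where "G = transpose_mat N * N"
  have G: "G \<in> carrier_mat k k" unfolding G_def using N by simp
  define y where "y = U *\<^sub>v a"
  have y: "y \<in> carrier_vec k" unfolding y_def using U a by simp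
  have Da: "mat_diag i d *\<^sub>v a \<in> carrier_vec i" by (rule mult_mat_vec_carrier[OF mat_diag_dim a])
  have xx: "x \<bullet> x = y \<bullet> (G *\<^sub>v y)"
    using quadratic_form_gram[of "transpose_mat N" k n y] N y unfolding x_def y_def G_def by simp
  have "x \<bullet> ((N * transpose_mat N) *\<^sub>v x) = (G *\<^sub>v y) \<bullet> (G *\<^sub>v y)"
    using quadratic_form_gram[OF N, of x] N y unfolding x_def y_def G_def
    by (simp add: assoc_mult_mat_vec[of _ k n _ k])
  also have "G *\<^sub>v y = U *\<^sub>v (mat_diag i d *\<^sub>v a)"
    unfolding y_def using G U a GU[folded G_def] by (metis assoc_mult_mat_vec mat_diag_dim)
  also have "(U *\<^sub>v (mat_diag i d *\<^sub>v a)) \<bullet> (U *\<^sub>v (mat_diag i d *\<^sub>v a)) = (\<Sum>l<i. d l * (d l * (a $ l)\<^sup>2))"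
    unfolding orthonormal_cols_scalar_prod[OF U UU Da Da] scalar_prod_self_eq_sum[OF Da]
    using a by (simp add: mat_diag_mult_vec power2_eq_square mult_ac)
  also have "\<dots> \<ge> (\<Sum>l<i. lam * (d l * (a $ l)\<^sup>2))"
  proof (rule sum_mono)
    fix l assume "l \<in> {..<i}"
    then have "lam \<le> d l" using d by simp
    moreover have "0 \<le> d l * (a $ l)\<^sup>2" using \<open>lam \<le> d l\<close> lam by simp
    ultimately show "lam * (d l * (a $ l)\<^sup>2) \<le> d l * (d l * (a $ l)\<^sup>2)" by (rule mult_right_mono)
  qed
  also have "(\<Sum>l<i. lam * (d l * (a $ l)\<^sup>2)) = lam * (x \<bullet> x)"
    unfolding xx y_def quadratic_form_eigen_cols[OF G U UU GU[folded G_def] a] by (simp add: sum_distrib_left)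
  finally have "lam * (x \<bullet> x) \<le> x \<bullet> ((N * transpose_mat N) *\<^sub>v x)" .
  moreover have "0 < x \<bullet> x"
  proof -
    have "0 < lam * (y \<bullet> y)"
      using lam real_scalar_prod_self_pos[OF a a0] orthonormal_cols_scalar_prod[OF U UU a a]
      unfolding y_def by simp
    also have "\<dots> \<le> x \<bullet> x"
      unfolding xx y_def by (rule quadratic_form_eigen_cols_ge[OF G U UU GU[folded G_def] a d])
    finally show ?thesis .
  qed
  ultimately show ?thesis by auto
qed

lemma eig_gram_le:
  fixes N :: "real mat"
  assumes N: "N \<in> carrier_mat n k" and i: "1 \<le> i" "i \<le> n" "i \<le> k"
  shows "eig (transpose_mat N * N) i \<le> eig (N * transpose_mat N) i"
proof -
  define G H where "G = transpose_mat N * N" and "H = N * transpose_mat N"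
  have G: "G \<in> carrier_mat k k" and H: "H \<in> carrier_mat n n" unfolding G_def H_def using N by auto
  have symG: "transpose_mat G = G" and symH: "transpose_mat H = H"
    unfolding G_def H_def using N by (simp_all add: transpose_mult)
  obtain U d where U: "U \<in> carrier_mat k i" and UU: "transpose_mat U * U = 1\<^sub>m i"
    and GU: "G * U = U * mat_diag i d" and d: "\<And>l. l < i \<Longrightarrow> eig G i \<le> d l"
    using top_eigenvectors[OF G symG i(1,3)] by blast
  show ?thesis
  proof (cases "eig G i \<le> 0")
    case True
    have "0 \<le> eig H i"
      by (rule eig_nonneg_of_psd[OF H symH i(1,2)])
        (use quadratic_form_gram[OF N] real_scalar_prod_self_nonneg in \<open>simp add: H_def\<close>)
    then show ?thesis using True unfolding G_def H_def by simp
  next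
    case False
    have "eig G i \<le> eig H i"
      by (rule le_eig_of_subspace[OF H symH i(1,2), of "N * U"])
        (use N U gram_image_rayleigh[OF N U UU GU[unfolded G_def], of "eig G i"] False d
          in \<open>auto simp: H_def assoc_mult_mat_vec[of _ n k _ i]\<close>)
    then show ?thesis unfolding G_def H_def .
  qed
qed

lemma quadratic_form_mat_diag_add:
  fixes A :: "real mat"
  assumes A: "A \<in> carrier_mat n n" and x: "x \<in> carrier_vec n"
  shows "x \<bullet> ((mat_diag n d + A) *\<^sub>v x) = (\<Sum>v<n. d v * (x $ v)\<^sup>2) + x \<bullet> (A *\<^sub>v x)"
proof -
  have "(mat_diag n d + A) *\<^sub>v x = mat_diag n d *\<^sub>v x + A *\<^sub>v x"
    by (rule add_mult_distrib_mat_vec[OF mat_diag_dim A x])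
  then have "x \<bullet> ((mat_diag n d + A) *\<^sub>v x) = x \<bullet> (mat_diag n d *\<^sub>v x) + x \<bullet> (A *\<^sub>v x)"
    using scalar_prod_add_distrib[OF x mult_mat_vec_carrier[OF mat_diag_dim x], of "A *\<^sub>v x"] A x
    by simp
  then show ?thesis using quadratic_form_mat_diag[OF x] by simp
qed

lemma eig_mat_diag_add_mono:
  fixes A :: "real mat"
  assumes A: "A \<in> carrier_mat n n" and sym: "transpose_mat A = A" and i: "1 \<le> i" "i \<le> n"
    and le: "\<And>v. v < n \<Longrightarrow> d' v + c \<le> d v"
  shows "eig (mat_diag n d' + A) i + c \<le> eig (mat_diag n d + A) i"
proof (rule eig_shift_mono[OF _ _ _ _ i])
  show "mat_diag n d' + A \<in> carrier_mat n n" "mat_diag n d + A \<in> carrier_mat n n" using A by auto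
  show "transpose_mat (mat_diag n d' + A) = mat_diag n d' + A"
    "transpose_mat (mat_diag n d + A) = mat_diag n d + A"
    using A sym by (auto intro!: eq_matI simp: mat_diag_def) (metis carrier_matD index_transpose_mat(1))+
  fix x :: "real vec" assume x: "x \<in> carrier_vec n"
  have "(\<Sum>v<n. d' v * (x $ v)\<^sup>2) + c * (x \<bullet> x) = (\<Sum>v<n. (d' v + c) * (x $ v)\<^sup>2)"
    unfolding scalar_prod_self_eq_sum[OF x] by (simp add: sum.distrib sum_distrib_left algebra_simps)
  also have "\<dots> \<le> (\<Sum>v<n. d v * (x $ v)\<^sup>2)"
    by (rule sum_mono) (use le in \<open>auto intro: mult_right_mono\<close>)
  finally show "x \<bullet> ((mat_diag n d' + A) *\<^sub>v x) + c * (x \<bullet> x) \<le> x \<bullet> ((mat_diag n d + A) *\<^sub>v x)"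
    unfolding quadratic_form_mat_diag_add[OF A x] by linarith
qed

corollary eig_le_eig_mat_diag_add:
  fixes A :: "real mat"
  assumes A: "A \<in> carrier_mat n n" and sym: "transpose_mat A = A" and i: "1 \<le> i" "i \<le> n"
    and le: "\<And>v. v < n \<Longrightarrow> c \<le> d v"
  shows "eig A i + c \<le> eig (mat_diag n d + A) i"
proof -
  have "mat_diag n (\<lambda>_. 0) + A = A"
    using A by (intro eq_matI) (auto simp: mat_diag_def)
  then show ?thesis using eig_mat_diag_add_mono[OF A sym i, of "\<lambda>_. 0" c d] le by simp
qed

lemma adj_mat_symmetric: "transpose_mat (adj_mat n E) = adj_mat n E"
  unfolding adj_mat_def by (intro eq_matI) (auto simp: insert_commute)

lemma partition_graph_adj_symmetric: "transpose_mat (partition_graph_adj F) = partition_graph_adj F"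
  unfolding partition_graph_adj_def by (intro eq_matI) (auto simp: Int_commute)

lemma signless_laplacian_eq:
  "signless_laplacian n E = mat_diag n (\<lambda>v. real (degree E v)) + adj_mat n E"
  unfolding signless_laplacian_def deg_mat_def mat_diag_def by (intro arg_cong2[where f = "(+)"] eq_matI) auto

lemma clique_partitionD:
  assumes "clique_partition n E F"
  shows "distinct F"
    and "C \<in> set F \<Longrightarrow> C \<subseteq> {..<n}"
    and "C \<in> set F \<Longrightarrow> 2 \<le> card C"
    and "C \<in> set F \<Longrightarrow> u \<in> C \<Longrightarrow> w \<in> C \<Longrightarrow> u \<noteq> w \<Longrightarrow> {u, w} \<in> E"
    and "e \<in> E \<Longrightarrow> \<exists>C \<in> set F. e \<subseteq> C"
    and "e \<in> E \<Longrightarrow> C \<in> set F \<Longrightarrow> e \<subseteq> C \<Longrightarrow> C' \<in> set F \<Longrightarrow> e \<subseteq> C' \<Longrightarrow> C = C'"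
  using assms unfolding clique_partition_def is_clique_def by blast+

lemma clique_partition_pair:
  assumes cp: "clique_partition n E F" and uw: "u \<noteq> w"
  shows "card {C \<in> set F. u \<in> C \<and> w \<in> C} = (if {u, w} \<in> E then 1 else 0)"
proof (cases "{u, w} \<in> E")
  case True
  then obtain C0 where "C0 \<in> set F" "{u, w} \<subseteq> C0" using clique_partitionD(5)[OF cp] by blast
  then have "{C \<in> set F. u \<in> C \<and> w \<in> C} = {C0}"
    using clique_partitionD(6)[OF cp True] by auto
  then show ?thesis using True by simp
next
  case False
  then have "{C \<in> set F. u \<in> C \<and> w \<in> C} = {}"
    using clique_partitionD(4)[OF cp] uw by blast
  then show ?thesis using False by simp
qed

lemma clique_partition_inter_le_1:
  assumes cp: "clique_partition n E F" and C: "C \<in> set F" and C': "C' \<in> set F" and ne: "C \<noteq> C'"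
  shows "card (C \<inter> C') \<le> 1"
proof -
  have fin: "finite (C \<inter> C')"
    using clique_partitionD(2)[OF cp C] by (meson finite_Int finite_nat_iff_bounded)
  have "\<forall>a \<in> C \<inter> C'. \<forall>b \<in> C \<inter> C'. a = b"
  proof (intro ballI, rule ccontr)
    fix a b assume ab: "a \<in> C \<inter> C'" "b \<in> C \<inter> C'" "a \<noteq> b"
    then have "{a, b} \<in> E" using clique_partitionD(4)[OF cp C] by blast
    then show False using clique_partitionD(6)[OF cp _ C _ C'] ne ab by blast
  qed
  then show ?thesis using card_le_Suc0_iff_eq[OF fin] by simp
qed

lemma clique_degree_le_degree:
  assumes sg: "simple_graph n E" and cp: "clique_partition n E F"
  shows "clique_degree F v \<le> degree E v"
proof -
  have other: "\<exists>u. u \<in> C \<and> u \<noteq> v" if "C \<in> set F" for C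
  proof -
    have "2 \<le> card C" using clique_partitionD(3)[OF cp that] .
    then obtain a b where "a \<in> C" "b \<in> C" "a \<noteq> b" by (auto simp: card_le_Suc_iff numeral_2_eq_2)
    then show ?thesis by blast
  qed
  define f where "f C = (SOME u. u \<in> C \<and> u \<noteq> v)" for C
  have f: "f C \<in> C" "f C \<noteq> v" if "C \<in> set F" for C
    using someI_ex[OF other[OF that]] unfolding f_def by auto
  have edge: "{f C, v} \<in> E" if "C \<in> set F" "v \<in> C" for C
    using clique_partitionD(4)[OF cp that(1)] f[OF that(1)] that(2) by blast
  have "inj_on f {C \<in> set F. v \<in> C}"
  proof (rule inj_onI)
    fix C C' assume C: "C \<in> {C \<in> set F. v \<in> C}" and C': "C' \<in> {C \<in> set F. v \<in> C}"
      and eq: "f C = f C'"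
    show "C = C'"
    proof (rule clique_partitionD(6)[OF cp edge])
      show "{f C, v} \<subseteq> C" using C f by auto
      show "{f C, v} \<subseteq> C'" using C' f[of C'] unfolding eq by auto
    qed (use C C' in auto)
  qed
  moreover have "f ` {C \<in> set F. v \<in> C} \<subseteq> {u. {u, v} \<in> E}" using edge by auto
  moreover have "finite {u. {u, v} \<in> E}"
  proof (rule finite_subset)
    show "{u. {u, v} \<in> E} \<subseteq> {..<n}"
      using sg unfolding simple_graph_def by (fastforce simp: doubleton_eq_iff)
  qed simp
  ultimately show ?thesis
    unfolding clique_degree_def degree_def by (rule card_inj_on_le)
qed

definition incidence_mat :: "nat \<Rightarrow> nat set list \<Rightarrow> real mat" where
  "incidence_mat n F = mat n (length F) (\<lambda>(v, j). if v \<in> F ! j then 1 else 0)"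

lemma sum_nth_indicator:
  assumes "distinct F"
  shows "(\<Sum>j<length F. if P (F ! j) then 1 else 0) = real (card {C \<in> set F. P C})"
proof -
  have "{C \<in> set F. P C} = (\<lambda>j. F ! j) ` {j \<in> {..<length F}. P (F ! j)}"
    by (auto simp: in_set_conv_nth)
  moreover have "inj_on (\<lambda>j. F ! j) {j \<in> {..<length F}. P (F ! j)}"
    using assms by (auto simp: inj_on_def nth_eq_iff_index_eq)
  ultimately have "card {C \<in> set F. P C} = card {j \<in> {..<length F}. P (F ! j)}"
    by (simp add: card_image)
  then show ?thesis
    using sum.inter_filter[of "{..<length F}" "\<lambda>_. 1 :: real" "\<lambda>j. P (F ! j)"] by simp
qed

lemma incidence_mat_mult_transpose:
  assumes sg: "simple_graph n E" and cp: "clique_partition n E F"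
  shows "incidence_mat n F * transpose_mat (incidence_mat n F)
    = mat_diag n (\<lambda>v. real (clique_degree F v)) + adj_mat n E"
proof (rule eq_matI)
  fix u w assume "u < dim_row (mat_diag n (\<lambda>v. real (clique_degree F v)) + adj_mat n E)"
    "w < dim_col (mat_diag n (\<lambda>v. real (clique_degree F v)) + adj_mat n E)"
  then have u: "u < n" and w: "w < n" by (auto simp: adj_mat_def)
  have "(incidence_mat n F * transpose_mat (incidence_mat n F)) $$ (u, w)
      = (\<Sum>j<length F. if u \<in> F ! j \<and> w \<in> F ! j then 1 else 0)"
    using u w by (auto simp: incidence_mat_def scalar_prod_def atLeast0LessThan intro!: sum.cong)
  also have "\<dots> = real (card {C \<in> set F. u \<in> C \<and> w \<in> C})"
    by (rule sum_nth_indicator[OF clique_partitionD(1)[OF cp]])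
  also have "\<dots> = (mat_diag n (\<lambda>v. real (clique_degree F v)) + adj_mat n E) $$ (u, w)"
  proof (cases "u = w")
    case True
    have "{u, u} \<notin> E" using sg unfolding simple_graph_def by (auto simp: doubleton_eq_iff)
    then show ?thesis using True u by (simp add: mat_diag_def adj_mat_def clique_degree_def)
  next
    case False
    then show ?thesis using clique_partition_pair[OF cp False] u w by (simp add: mat_diag_def adj_mat_def)
  qed
  finally show "(incidence_mat n F * transpose_mat (incidence_mat n F)) $$ (u, w)
      = (mat_diag n (\<lambda>v. real (clique_degree F v)) + adj_mat n E) $$ (u, w)" .
qed (auto simp: incidence_mat_def adj_mat_def)

lemma transpose_incidence_mat_mult:
  assumes cp: "clique_partition n E F" and cu: "clique_uniform F s"
  shows "transpose_mat (incidence_mat n F) * incidence_mat n F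
    = mat_diag (length F) (\<lambda>_. real s) + partition_graph_adj F"
proof (rule eq_matI)
  fix j l assume "j < dim_row (mat_diag (length F) (\<lambda>_. real s) + partition_graph_adj F)"
    "l < dim_col (mat_diag (length F) (\<lambda>_. real s) + partition_graph_adj F)"
  then have j: "j < length F" and l: "l < length F" by (auto simp: partition_graph_adj_def)
  have Fj: "F ! j \<in> set F" and Fl: "F ! l \<in> set F" using j l by auto
  have sub: "F ! j \<subseteq> {..<n}" by (rule clique_partitionD(2)[OF cp Fj])
  have "(transpose_mat (incidence_mat n F) * incidence_mat n F) $$ (j, l)
      = (\<Sum>v<n. if v \<in> F ! j \<inter> F ! l then 1 else 0)"
    using j l by (auto simp: incidence_mat_def scalar_prod_def atLeast0LessThan intro!: sum.cong)
  also have "\<dots> = real (card (F ! j \<inter> F ! l))"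
  proof -
    have "{v \<in> {..<n}. v \<in> F ! j \<inter> F ! l} = F ! j \<inter> F ! l" using sub by auto
    then show ?thesis
      using sum.inter_filter[of "{..<n}" "\<lambda>_. 1 :: real" "\<lambda>v. v \<in> F ! j \<inter> F ! l"] by simp
  qed
  also have "\<dots> = (mat_diag (length F) (\<lambda>_. real s) + partition_graph_adj F) $$ (j, l)"
  proof (cases "j = l")
    case True
    then show ?thesis using cu Fj j unfolding clique_uniform_def
      by (simp add: mat_diag_def partition_graph_adj_def)
  next
    case False
    then have "F ! j \<noteq> F ! l" using clique_partitionD(1)[OF cp] j l by (simp add: nth_eq_iff_index_eq)
    then have "card (F ! j \<inter> F ! l) \<le> 1" by (rule clique_partition_inter_le_1[OF cp Fj Fl])
    moreover have "finite (F ! j \<inter> F ! l)" using sub by (simp add: finite_subset)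
    ultimately have "card (F ! j \<inter> F ! l) = (if F ! j \<inter> F ! l \<noteq> {} then 1 else 0)"
      by (auto simp: card_gt_0_iff le_Suc_eq)
    then show ?thesis using False j l by (simp add: mat_diag_def partition_graph_adj_def)
  qed
  finally show "(transpose_mat (incidence_mat n F) * incidence_mat n F) $$ (j, l)
      = (mat_diag (length F) (\<lambda>_. real s) + partition_graph_adj F) $$ (j, l)" .
qed (auto simp: incidence_mat_def partition_graph_adj_def)

lemma eig_adj_mat_add_le_signless_laplacian:
  assumes sg: "simple_graph n E" and cp: "clique_partition n E F" and reg: "clique_regular n F t"
    and i: "1 \<le> i" "i \<le> n"
  shows "eig (adj_mat n E) i + real t \<le> eig (signless_laplacian n E) i"
  unfolding signless_laplacian_eq
proof (rule eig_le_eig_mat_diag_add[OF _ adj_mat_symmetric i])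
  show "adj_mat n E \<in> carrier_mat n n" by (simp add: adj_mat_def)
  show "real t \<le> real (degree E v)" if "v < n" for v
    using reg clique_degree_le_degree[OF sg cp, of v] that unfolding clique_regular_def by simp
qed

lemma eig_partition_graph_adj_add_le:
  assumes cp: "clique_partition n E F" and cu: "clique_uniform F s"
    and i: "1 \<le> i" "i \<le> length F"
  shows "eig (partition_graph_adj F) i + real s
    \<le> eig (transpose_mat (incidence_mat n F) * incidence_mat n F) i"
  unfolding transpose_incidence_mat_mult[OF cp cu]
  by (rule eig_le_eig_mat_diag_add[OF _ partition_graph_adj_symmetric i])
    (simp_all add: partition_graph_adj_def)

lemma eig_incidence_gram_le_signless_laplacian:
  assumes sg: "simple_graph n E" and cp: "clique_partition n E F" and i: "1 \<le> i" "i \<le> n"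
  shows "eig (incidence_mat n F * transpose_mat (incidence_mat n F)) i \<le> eig (signless_laplacian n E) i"
  using eig_mat_diag_add_mono[OF _ adj_mat_symmetric i, where d' = "\<lambda>v. real (clique_degree F v)" and c = 0]
    clique_degree_le_degree[OF sg cp]
  unfolding incidence_mat_mult_transpose[OF sg cp] signless_laplacian_eq by (simp add: adj_mat_def)

theorem mainTheorem8:
  fixes n k i t s :: nat and E :: "nat set set" and F :: "nat set list"
  assumes "simple_graph n E"
    and "clique_partition n E F"
    and "length F = k"
    and "1 \<le> i" and "i \<le> min n k"
  shows "(clique_regular n F t \<longrightarrow>
            eig (signless_laplacian n E) i - eig (adj_mat n E) i \<ge> real t)
       \<and> (clique_uniform F s \<longrightarrow>
            eig (signless_laplacian n E) i - eig (partition_graph_adj F) i \<ge> real s)"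
proof (intro conjI impI)
  have i: "1 \<le> i" "i \<le> n" "i \<le> k" using assms(4,5) by auto
  show "eig (signless_laplacian n E) i - eig (adj_mat n E) i \<ge> real t" if "clique_regular n F t"
    using eig_adj_mat_add_le_signless_laplacian[OF assms(1,2) that i(1,2)] by simp
  show "eig (signless_laplacian n E) i - eig (partition_graph_adj F) i \<ge> real s"
    if "clique_uniform F s"
  proof -
    let ?N = "incidence_mat n F"
    have "eig (partition_graph_adj F) i + real s \<le> eig (transpose_mat ?N * ?N) i"
      using eig_partition_graph_adj_add_le[OF assms(2) that i(1)] i(3) assms(3) by simp
    also have "\<dots> \<le> eig (?N * transpose_mat ?N) i"
      by (rule eig_gram_le[OF _ i]) (simp add: incidence_mat_def assms(3))
    also have "\<dots> \<le> eig (signless_laplacian n E) i"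
      by (rule eig_incidence_gram_le_signless_laplacian[OF assms(1,2) i(1,2)])
    finally show ?thesis by simp
  qed
qed

end
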